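(* Let $\rho,p,u,x$ be grid functions satisfying the scheme (M) at every node with $\check B\equiv0$ (horizontal bottom). Then at every node the discrete center-of-mass law $$(t\,u-x)_{\check t}+(t\,Q)_{\bar s}=0$$ holds, where $t$ is the time coordinate of the node (so $(tu-x)_{\check t}=\big(tu-x-(t-\tau)\check u+\check x\big)/\tau$).
   Context: Fix mesh steps $\tau>0$, $h>0$ and a constant $\alpha\in\mathbb R$. A grid function is a real-valued function $f=f(t,s)$ on the uniform orthogonal mesh $\{(n\tau,kh): n,k\in\mathbb Z\}$; at the node $(n\tau,kh)$ the symbol $t$ denotes $n\tau$. Shifts: $\hat f=f(t+\tau,s)$, $\check f=f(t-\tau,s)$, $f^+=f_+=f(t,s+h)$, $f^-=f_-=f(t,s-h)$; a shift applied to a composite expression shifts the whole expression (e.g. $\check u_s$ is $u_s$ at $(t-\tau,s)$). Differences: $f_t=(\hat f-f)/\tau$, $f_{\check t}=(f-\check f)/\tau$, $f_s=(f_+-f)/h$, $f_{\bar s}=(f-f_-)/h$. Let $\rho>0$, $p>0$, $u$, $x$, $\check B$ be grid functions, and set $$Q=\Big(\frac{4}{\rho\check\rho}-\frac{2}{\sqrt p}\Big(\frac1\rho+\frac1{\check\rho}\Big)+\frac1p\Big)^{-1}-\frac{\alpha^2}{\sqrt p}$$ (the bracket being assumed nonzero). The scheme (M) (shallow water MHD in mass Lagrangian coordinates) is the requirement that at every node $$\rho_{\check t}+\tfrac12\rho\check\rho\,(u_s+\check u_s)=0,\quad u_{\check t}+Q_{\bar s}-\check B=0,\quad x_t=u,\quad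 \check x_s+x_s=\frac{1}{\sqrt{\check p}}+\frac1{\sqrt p}=\frac{2}{\check\rho}.$$ *)

theory Defs
  imports Complex_Main
begin

text \<open>Grid functions: f n k is the value at the node (n*tau, k*h).\<close>
type_synonym grid = "int \<Rightarrow> int \<Rightarrow> real"

definition dt :: "real \<Rightarrow> grid \<Rightarrow> grid" where
  "dt \<tau> f = (\<lambda>n k. (f (n+1) k - f n k) / \<tau>)"
definition dtb :: "real \<Rightarrow> grid \<Rightarrow> grid" where
  "dtb \<tau> f = (\<lambda>n k. (f n k - f (n-1) k) / \<tau>)"
definition ds :: "real \<Rightarrow> grid \<Rightarrow> grid" where
  "ds h f = (\<lambda>n k. (f n (k+1) - f n k) / h)"
definition dsb :: "real \<Rightarrow> grid \<Rightarrow> grid" where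
  "dsb h f = (\<lambda>n k. (f n k - f n (k-1)) / h)"

definition Qbr :: "grid \<Rightarrow> grid \<Rightarrow> grid" where
  "Qbr \<rho> p = (\<lambda>n k. 4 / (\<rho> n k * \<rho> (n-1) k)
      - 2 / sqrt (p n k) * (1 / \<rho> n k + 1 / \<rho> (n-1) k) + 1 / p n k)"

definition Q :: "real \<Rightarrow> grid \<Rightarrow> grid \<Rightarrow> grid" where
  "Q \<alpha> \<rho> p = (\<lambda>n k. inverse (Qbr \<rho> p n k) - \<alpha>^2 / sqrt (p n k))"

text \<open>Scheme (M); Bc is the grid function \<open>\<check>B\<close> itself.\<close>
definition schemeM :: "real \<Rightarrow> real \<Rightarrow> real \<Rightarrow> grid \<Rightarrow> grid \<Rightarrow> grid \<Rightarrow> grid \<Rightarrow> grid \<Rightarrow> bool" where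
  "schemeM \<tau> h \<alpha> \<rho> p u x Bc \<longleftrightarrow> (\<forall>n k.
      dtb \<tau> \<rho> n k + 1/2 * \<rho> n k * \<rho> (n-1) k * (ds h u n k + ds h u (n-1) k) = 0
    \<and> dtb \<tau> u n k + dsb h (Q \<alpha> \<rho> p) n k - Bc n k = 0
    \<and> dt \<tau> x n k = u n k
    \<and> ds h x (n-1) k + ds h x n k = 1 / sqrt (p (n-1) k) + 1 / sqrt (p n k)
    \<and> 1 / sqrt (p (n-1) k) + 1 / sqrt (p n k) = 2 / \<rho> (n-1) k)"

end

theory Submission
  imports Defs
begin

text \<open>Multiplying by the node time t acts as a discrete product rule: the backward time
  difference of t u is t times that of u plus the earlier value of u, which the earlier x_t cancels
  exactly, while t commutes with the space difference. Hence only the momentum equation with a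
  horizontal bottom and x_t = u are needed.\<close>

lemma dtb_time_weighted:
  assumes "\<tau> \<noteq> 0"
  shows "dtb \<tau> (\<lambda>n k. real_of_int n * \<tau> * u n k - x n k) n k
       = real_of_int n * \<tau> * dtb \<tau> u n k + u (n-1) k - dt \<tau> x (n-1) k"
  using assms unfolding dtb_def dt_def by (simp add: field_simps)

lemma dsb_time_weighted:
  "dsb h (\<lambda>n k. real_of_int n * \<tau> * q n k) n k = real_of_int n * \<tau> * dsb h q n k"
  unfolding dsb_def by (simp add: right_diff_distrib)

lemma time_weighted_balance_law:
  assumes "\<tau> \<noteq> 0"
    and velocity: "dt \<tau> x (n-1) k = u (n-1) k"
    and momentum: "dtb \<tau> u n k + dsb h q n k = 0"
  shows "dtb \<tau> (\<lambda>n k. real_of_int n * \<tau> * u n k - x n k) n k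
       + dsb h (\<lambda>n k. real_of_int n * \<tau> * q n k) n k = 0"
proof -
  have "dtb \<tau> (\<lambda>n k. real_of_int n * \<tau> * u n k - x n k) n k
      + dsb h (\<lambda>n k. real_of_int n * \<tau> * q n k) n k
      = real_of_int n * \<tau> * (dtb \<tau> u n k + dsb h q n k)"
    unfolding dtb_time_weighted[OF \<open>\<tau> \<noteq> 0\<close>] dsb_time_weighted velocity
    by (simp add: algebra_simps)
  with momentum show ?thesis by simp
qed

theorem mainTheorem11:
  fixes \<tau> h \<alpha> :: real and \<rho> p u x :: grid
  assumes "\<tau> > 0" and "h > 0"
    and "\<And>n k. \<rho> n k > 0" and "\<And>n k. p n k > 0"
    and "\<And>n k. Qbr \<rho> p n k \<noteq> 0"
    and "schemeM \<tau> h \<alpha> \<rho> p u x (\<lambda>n k. 0)"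
  shows "\<forall>n k. dtb \<tau> (\<lambda>n k. (real_of_int n * \<tau>) * u n k - x n k) n k
               + dsb h (\<lambda>n k. (real_of_int n * \<tau>) * Q \<alpha> \<rho> p n k) n k = 0"
proof (intro allI)
  fix n k
  have velocity: "dt \<tau> x (n-1) k = u (n-1) k"
    and momentum: "dtb \<tau> u n k + dsb h (Q \<alpha> \<rho> p) n k = 0"
    using \<open>schemeM \<tau> h \<alpha> \<rho> p u x (\<lambda>n k. 0)\<close> unfolding schemeM_def by simp_all
  from \<open>\<tau> > 0\<close> show "dtb \<tau> (\<lambda>n k. (real_of_int n * \<tau>) * u n k - x n k) n k
               + dsb h (\<lambda>n k. (real_of_int n * \<tau>) * Q \<alpha> \<rho> p n k) n k = 0"
    by (intro time_weighted_balance_law velocity momentum) simp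
qed

end
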